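(* For every positive integer $n$, the order supergraph $\mathcal{S}(A_n)$ of the alternating group $A_n$ is cyclically separable if and only if $n \geq 4$.
   Context: All graphs are simple and undirected. For a finite group $G$, the order supergraph $\mathcal{S}(G)$ is the graph with vertex set $G$ in which two distinct vertices $x,y$ are adjacent if and only if the order of $x$ divides the order of $y$ or the order of $y$ divides the order of $x$. For a graph $\Gamma$, a vertex cutset is a set $S$ of vertices such that $\Gamma - S$ is disconnected; a cyclic vertex cutset is a vertex cutset $S$ such that $\Gamma - S$ has at least two connected components each of which contains a cycle. $\Gamma$ is called cyclically separable if it has a cyclic vertex cutset. *)

theory Defs
  imports "HOL-Algebra.Sym_Groups" "HOL-Algebra.Multiplicative_Group"
begin

(* Simple graphs given by a vertex set V and a symmetric irreflexive adjacency relation E. *)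

definition walk_rel :: "'a set \<Rightarrow> ('a \<Rightarrow> 'a \<Rightarrow> bool) \<Rightarrow> ('a \<times> 'a) set" where
  "walk_rel V E = {(a, b). a \<in> V \<and> b \<in> V \<and> E a b}"

definition component :: "'a set \<Rightarrow> ('a \<Rightarrow> 'a \<Rightarrow> bool) \<Rightarrow> 'a \<Rightarrow> 'a set" where
  "component V E x = {y. (x, y) \<in> (walk_rel V E)\<^sup>*}"

definition components :: "'a set \<Rightarrow> ('a \<Rightarrow> 'a \<Rightarrow> bool) \<Rightarrow> 'a set set" where
  "components V E = component V E ` V"

definition has_cycle :: "'a set \<Rightarrow> ('a \<Rightarrow> 'a \<Rightarrow> bool) \<Rightarrow> bool" where
  "has_cycle C E = (\<exists>vs. length vs \<ge> 3 \<and> distinct vs \<and> set vs \<subseteq> C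
      \<and> (\<forall>i < length vs - 1. E (vs ! i) (vs ! Suc i))
      \<and> E (last vs) (hd vs))"

definition cyclic_vertex_cutset :: "'a set \<Rightarrow> ('a \<Rightarrow> 'a \<Rightarrow> bool) \<Rightarrow> 'a set \<Rightarrow> bool" where
  "cyclic_vertex_cutset V E S = (S \<subseteq> V \<and>
      (\<exists>C1 \<in> components (V - S) E. \<exists>C2 \<in> components (V - S) E.
          C1 \<noteq> C2 \<and> has_cycle C1 E \<and> has_cycle C2 E))"

definition cyclically_separable :: "'a set \<Rightarrow> ('a \<Rightarrow> 'a \<Rightarrow> bool) \<Rightarrow> bool" where
  "cyclically_separable V E = (\<exists>S. cyclic_vertex_cutset V E S)"

definition order_supergraph_adj :: "('a, 'b) monoid_scheme \<Rightarrow> 'a \<Rightarrow> 'a \<Rightarrow> bool" where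
  "order_supergraph_adj G x y = (x \<noteq> y \<and>
      (group.ord G x dvd group.ord G y \<or> group.ord G y dvd group.ord G x))"

end

theory Submission
  imports Defs "HOL-Computational_Algebra.Primes"
begin

text \<open>
  Two disjoint components containing cycles need at least six vertices, while \<open>A\<^sub>n\<close> has at
  most three elements for \<open>n \<le> 3\<close>. Conversely, elements whose orders are 2 and 3 are never
  adjacent in the order supergraph, so deleting every element of any other order separates the
  elements of order 2 from those of order 3; for \<open>n \<ge> 4\<close> the three double transpositions
  and three 3-cycles on \<open>{1,2,3,4}\<close> give a triangle on each side.
\<close>

lemma component_subset: "component V E x \<subseteq> insert x V"
proof
  fix y assume "y \<in> component V E x"
  then have "(x, y) \<in> (walk_rel V E)\<^sup>*" by (simp add: component_def)
  then show "y \<in> insert x V" by induct (auto simp: walk_rel_def)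
qed

lemma components_subset: "C \<in> components V E \<Longrightarrow> C \<subseteq> V"
  using component_subset by (fastforce simp: components_def)

lemma component_subset_if_closed:
  assumes "x \<in> A" "\<And>y z. y \<in> A \<Longrightarrow> z \<in> V \<Longrightarrow> E y z \<Longrightarrow> z \<in> A"
  shows "component V E x \<subseteq> A"
proof
  fix y assume "y \<in> component V E x"
  then have "(x, y) \<in> (walk_rel V E)\<^sup>*" by (simp add: component_def)
  then show "y \<in> A" by induct (use assms in \<open>auto simp: walk_rel_def\<close>)
qed

lemma component_eq:
  assumes "symp E" and "y \<in> component V E x"
  shows "component V E y = component V E x"
proof -
  have "sym (walk_rel V E)"
    using assms(1) by (auto simp: sym_def walk_rel_def dest: sympD)
  then have "sym ((walk_rel V E)\<^sup>*)" by (rule sym_rtrancl)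
  moreover have "(x, y) \<in> (walk_rel V E)\<^sup>*" using assms(2) by (simp add: component_def)
  ultimately show ?thesis
    unfolding component_def by (blast dest: symD intro: rtrancl_trans)
qed

lemma components_disjoint:
  assumes "symp E" "C1 \<in> components V E" "C2 \<in> components V E" "C1 \<noteq> C2"
  shows "C1 \<inter> C2 = {}"
proof (rule ccontr)
  obtain x1 x2 where "C1 = component V E x1" "C2 = component V E x2"
    using assms(2,3) by (auto simp: components_def)
  moreover assume "C1 \<inter> C2 \<noteq> {}"
  then obtain y where "y \<in> C1" "y \<in> C2" by blast
  ultimately have "C1 = C2" using component_eq[OF assms(1)] by metis
  with assms(4) show False ..
qed

lemma card_ge_3_if_has_cycle:
  assumes "has_cycle C E" "finite C"
  shows "card C \<ge> 3"
proof -
  obtain vs where "length vs \<ge> 3" "distinct vs" "set vs \<subseteq> C"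
    using assms(1) unfolding has_cycle_def by blast
  then have "card (set vs) = length vs" "card (set vs) \<le> card C"
    using card_mono[OF assms(2)] distinct_card by auto
  then show ?thesis using \<open>length vs \<ge> 3\<close> by linarith
qed

lemma has_cycle_triangle:
  assumes "distinct [a, b, c]" "{a, b, c} \<subseteq> C" "E a b" "E b c" "E c a"
  shows "has_cycle C E"
  unfolding has_cycle_def
  using assms by (intro exI[of _ "[a, b, c]"]) (auto simp: less_Suc_eq numeral_eq_Suc)

lemma not_cyclically_separable_if_card_less_6:
  assumes "symp E" "finite V" "card V < 6"
  shows "\<not> cyclically_separable V E"
proof
  assume "cyclically_separable V E"
  then obtain S C1 C2 where C: "C1 \<in> components (V - S) E" "C2 \<in> components (V - S) E"
    "C1 \<noteq> C2" "has_cycle C1 E" "has_cycle C2 E"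
    unfolding cyclically_separable_def cyclic_vertex_cutset_def by blast
  have sub: "C1 \<union> C2 \<subseteq> V" using components_subset[OF C(1)] components_subset[OF C(2)] by blast
  then have fin: "finite C1" "finite C2" using assms(2) finite_subset by blast+
  have "6 \<le> card C1 + card C2"
    using card_ge_3_if_has_cycle[OF C(4) fin(1)] card_ge_3_if_has_cycle[OF C(5) fin(2)] by simp
  also have "\<dots> = card (C1 \<union> C2)"
    using card_Un_disjoint[OF fin components_disjoint[OF assms(1) C(1-3)]] by simp
  also have "\<dots> \<le> card V" using card_mono[OF assms(2) sub] .
  finally show False using assms(3) by simp
qed

lemma triangle_subset_component:
  assumes "{a, b, c} \<subseteq> V" "E a b" "E b c"
  shows "{a, b, c} \<subseteq> component V E a"
proof -
  have "(a, b) \<in> walk_rel V E" "(b, c) \<in> walk_rel V E"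
    using assms by (auto simp: walk_rel_def)
  then show ?thesis by (auto simp: component_def)
qed

lemma cyclically_separable_if_separated_triangles:
  assumes "A \<subseteq> V" "B \<subseteq> V" "A \<inter> B = {}"
    and no_edge: "\<And>x y. x \<in> A \<Longrightarrow> y \<in> B \<Longrightarrow> \<not> E x y"
    and "distinct [a, b, c]" "{a, b, c} \<subseteq> A" "E a b" "E b c" "E c a"
    and "distinct [d, e, f]" "{d, e, f} \<subseteq> B" "E d e" "E e f" "E f d"
  shows "cyclically_separable V E"
proof -
  define S where "S = V - (A \<union> B)"
  have rest: "V - S = A \<union> B" using assms(1,2) by (auto simp: S_def)
  let ?C1 = "component (V - S) E a" and ?C2 = "component (V - S) E d"
  have comps: "?C1 \<in> components (V - S) E" "?C2 \<in> components (V - S) E"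
    using assms(6,11) rest by (auto simp: components_def)
  have "?C1 \<subseteq> A"
    using assms(6) no_edge rest by (intro component_subset_if_closed) auto
  moreover have "d \<in> ?C2" by (simp add: component_def)
  ultimately have "?C1 \<noteq> ?C2" using assms(3,11) by blast
  moreover have "has_cycle ?C1 E"
    using assms(5,7-9) triangle_subset_component[of a b c "V - S"] assms(6) rest
    by (intro has_cycle_triangle) auto
  moreover have "has_cycle ?C2 E"
    using assms(10,12-14) triangle_subset_component[of d e f "V - S"] assms(11) rest
    by (intro has_cycle_triangle) auto
  ultimately show ?thesis
    unfolding cyclically_separable_def cyclic_vertex_cutset_def
    using comps by (intro exI[of _ S]) (auto simp: S_def)
qed

lemma order_supergraph_adj_symp: "symp (order_supergraph_adj G)"
  by (auto simp: symp_def order_supergraph_adj_def)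

lemma order_supergraph_cyclically_separable:
  assumes "\<not> p dvd q" "\<not> q dvd p"
    and "distinct [a, b, c]" "{a, b, c} \<subseteq> carrier G"
      "group.ord G a = p" "group.ord G b = p" "group.ord G c = p"
    and "distinct [d, e, f]" "{d, e, f} \<subseteq> carrier G"
      "group.ord G d = q" "group.ord G e = q" "group.ord G f = q"
  shows "cyclically_separable (carrier G) (order_supergraph_adj G)"
proof (rule cyclically_separable_if_separated_triangles[where A = "{x \<in> carrier G. group.ord G x = p}"
      and B = "{x \<in> carrier G. group.ord G x = q}" and a = a and b = b and c = c
      and d = d and e = e and f = f])
  show "{x \<in> carrier G. group.ord G x = p} \<inter> {x \<in> carrier G. group.ord G x = q} = {}"
    using assms(1) by auto
  show "\<not> order_supergraph_adj G x y"
    if "x \<in> {x \<in> carrier G. group.ord G x = p}" "y \<in> {x \<in> carrier G. group.ord G x = q}" for x y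
    using that assms(1,2) by (simp add: order_supergraph_adj_def)
qed (use assms in \<open>auto simp: order_supergraph_adj_def\<close>)

lemma (in group) ord_eq_prime:
  assumes "x \<in> carrier G" "x \<noteq> \<one>" "x [^] p = \<one>" "prime p"
  shows "ord x = p"
proof -
  have "ord x dvd p" using pow_eq_id[OF assms(1)] assms(3) by blast
  moreover have "ord x \<noteq> 1" using ord_eq_1[OF assms(1)] assms(2) by blast
  ultimately show ?thesis using assms(4) prime_nat_iff by blast
qed

lemma alt_group_pow: "x [^]\<^bsub>alt_group n\<^esub> (k::nat) = x ^^ k"
  by (induction k) (simp_all add: alt_group_mult alt_group_one comp_def funpow_swap1)

lemma alt_group_ord_eq_prime:
  assumes "x \<in> carrier (alt_group n)" "x \<noteq> id" "x ^^ p = id" "prime p"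
  shows "group.ord (alt_group n) x = p"
  using group.ord_eq_prime[OF alt_group_is_group] assms by (simp add: alt_group_pow alt_group_one)

lemma transpose_comp_transpose_in_alt_group:
  assumes "{a, b, c, d} \<subseteq> {1..n}" "a \<noteq> b" "c \<noteq> d"
  shows "transpose a b \<circ> transpose c d \<in> carrier (alt_group n)"
  using assms
  by (simp add: alt_group_carrier permutes_compose permutes_swap_id evenperm_comp
      permutation_swap_id evenperm_swap)

lemma alt_group_cyclically_separable:
  assumes "n \<ge> 4"
  shows "cyclically_separable (carrier (alt_group n)) (order_supergraph_adj (alt_group n))"
proof -
  define a where "a = transpose (1::nat) 2 \<circ> transpose 3 4"
  define b where "b = transpose (1::nat) 3 \<circ> transpose 2 4"
  define c where "c = transpose (1::nat) 4 \<circ> transpose 2 3"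
  define d where "d = transpose (1::nat) 2 \<circ> transpose 2 3"
  define e where "e = transpose (2::nat) 3 \<circ> transpose 1 2"
  define f where "f = transpose (1::nat) 2 \<circ> transpose 2 4"
  note defs = a_def b_def c_def d_def e_def f_def
  have carrier: "{a, b, c, d, e, f} \<subseteq> carrier (alt_group n)"
    unfolding defs using assms by (auto intro!: transpose_comp_transpose_in_alt_group)
  have distinct: "distinct [a, b, c, id]" "distinct [d, e, f, id]"
    unfolding defs by (auto simp: fun_eq_iff transpose_def)
  have squares: "a ^^ 2 = id" "b ^^ 2 = id" "c ^^ 2 = id"
    unfolding defs by (auto simp: fun_eq_iff transpose_def numeral_eq_Suc)
  have ord2: "group.ord (alt_group n) x = 2" if "x \<in> {a, b, c}" for x
  proof (rule alt_group_ord_eq_prime)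
    show "x \<in> carrier (alt_group n)" using that carrier by blast
    show "x \<noteq> id" using that distinct(1) by auto
    show "x ^^ 2 = id" using that squares by blast
  qed simp
  have cubes: "d ^^ 3 = id" "e ^^ 3 = id" "f ^^ 3 = id"
    unfolding defs by (auto simp: fun_eq_iff transpose_def numeral_eq_Suc)
  have ord3: "group.ord (alt_group n) x = 3" if "x \<in> {d, e, f}" for x
  proof (rule alt_group_ord_eq_prime)
    show "x \<in> carrier (alt_group n)" using that carrier by blast
    show "x \<noteq> id" using that distinct(2) by auto
    show "x ^^ 3 = id" using that cubes by blast
  qed simp
  show ?thesis
    by (rule order_supergraph_cyclically_separable[where a = a and b = b and c = c
          and d = d and e = e and f = f])
      (use carrier distinct ord2 ord3 in simp_all)
qed

lemma finite_carrier_alt_group: "finite (carrier (alt_group n))"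
proof (rule finite_subset)
  show "carrier (alt_group n) \<subseteq> {p. p permutes {1..n}}" by (auto simp: alt_group_carrier)
qed (simp add: finite_permutations)

lemma card_alt_group_le_3:
  assumes "n \<le> 3"
  shows "card (carrier (alt_group n)) \<le> 3"
proof (cases "n \<ge> 2")
  case True
  have "fact n \<le> (fact 3 :: nat)" using assms by (rule fact_mono)
  then show ?thesis
    using alt_group_card_carrier[OF True] by (simp add: numeral_eq_Suc)
next
  case False
  have "card (carrier (alt_group n)) \<le> card (carrier (sym_group n))"
    by (rule card_mono) (auto simp: sym_group_def alt_group_carrier finite_permutations)
  also have "\<dots> = 1"
    using False by (auto simp: sym_group_card_carrier not_le less_Suc_eq numeral_2_eq_2)
  finally show ?thesis by simp
qed

theorem mainTheorem7:
  fixes n :: nat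
  assumes "n \<ge> 1"
  shows "cyclically_separable (carrier (alt_group n)) (order_supergraph_adj (alt_group n))
           \<longleftrightarrow> n \<ge> 4"
proof
  show "n \<ge> 4" if "cyclically_separable (carrier (alt_group n)) (order_supergraph_adj (alt_group n))"
  proof (rule ccontr)
    assume "\<not> n \<ge> 4"
    then have "card (carrier (alt_group n)) < 6" using card_alt_group_le_3[of n] by simp
    then show False
      using not_cyclically_separable_if_card_less_6[OF order_supergraph_adj_symp
          finite_carrier_alt_group] that by blast
  qed
  show "n \<ge> 4 \<Longrightarrow> cyclically_separable (carrier (alt_group n)) (order_supergraph_adj (alt_group n))"
    by (rule alt_group_cyclically_separable)
qed

end
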